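(* Assume $\beta>0$, $k>0$ and $u_0=-k$. Let $H(u,y)=\frac{y^2}{2}+\beta\left(-\frac{u^4}{4}+\frac{k+u_0}{3}u^3-\frac{ku_0}{2}u^2\right)=\frac{y^2}{2}+\beta\left(-\frac{u^4}{4}+\frac{k^2u^2}{2}\right)$, and for $h\in\left(0,\frac{\beta u_0^4}{4}\right)$ let $\Gamma_h$ be the closed component of $\{H(u,y)=h\}$ surrounding $(0,0)$. Then for every even positive integer $n$ the ratio $$G_n(h):=\frac{\oint_{\Gamma_h}u^n y\,du}{\oint_{\Gamma_h}y\,du}$$ is monotone for $h\in\left(0,\frac{\beta u_0^4}{4}\right)$.
   Context: For these parameters $(0,0)$ is a center of the Hamiltonian system $u'=y$, $y'=-\beta u(u-u_0)(k-u)$, and the curves $\Gamma_h$, $h\in(0,\beta u_0^4/4)$, form the periodic annulus around it, bounded by the heteroclinic orbits joining the saddles $(-k,0)$ and $(k,0)$. *)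

theory Defs
  imports "HOL-Analysis.Analysis"
begin

definition Ham :: "real \<Rightarrow> real \<Rightarrow> real \<Rightarrow> real \<Rightarrow> real \<Rightarrow> real" where
  "Ham \<beta> k u0 u y = y^2/2 + \<beta> * (- (u^4)/4 + (k + u0)/3 * u^3 - k*u0/2 * u^2)"

text \<open>The oval Gamma_h: the closed component of the level set {H = h} surrounding
  the origin.  For u0 = -k and 0 < h < beta k^4/4 this is exactly the part of
  the level set lying in the strip |u| < k (the other components lie in |u| > k).\<close>
definition Gamma :: "real \<Rightarrow> real \<Rightarrow> real \<Rightarrow> real \<Rightarrow> (real \<times> real) set" where
  "Gamma \<beta> k u0 h = {(u, y). \<bar>u\<bar> < k \<and> Ham \<beta> k u0 u y = h}"

text \<open>The line integral of the 1-form u^n y du along Gamma_h, traversed once in the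
  direction of the Hamiltonian flow (u' = y, i.e. clockwise).  Gamma_h is the union of
  the graphs y = +Y(u) and y = -Y(u), Y(u) = sqrt(2(h - (H(u,0)))), over the projection
  of Gamma_h to the u-axis; the upper branch is traversed with u increasing and the
  lower one with u decreasing, so both contribute  integral of u^n Y(u) du.\<close>
definition oval_integral :: "real \<Rightarrow> real \<Rightarrow> real \<Rightarrow> nat \<Rightarrow> real \<Rightarrow> real" where
  "oval_integral \<beta> k u0 n h =
     integral {u. \<exists>y. (u, y) \<in> Gamma \<beta> k u0 h}
       (\<lambda>u. 2 * u ^ n * sqrt (2 * (h - Ham \<beta> k u0 u 0)))"

definition G_ratio :: "real \<Rightarrow> real \<Rightarrow> real \<Rightarrow> nat \<Rightarrow> real \<Rightarrow> real" where
  "G_ratio \<beta> k u0 n h = oval_integral \<beta> k u0 n h / oval_integral \<beta> k u0 0 h"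

end

theory Submission
  imports Defs
begin

text \<open>For u0 = -k the oval integrals are moments of the weight
  w_h(u) = 2 sqrt(2 max(0, h - V(u))) on [-k, k], where V(u) = \<beta> (k^2 u^2/2 - u^4/4),
  so G_n(h) is the w_h-mean E of u^n. For h < h' the ratio w_h'/w_h = sqrt((h' - V)/(h - V))
  grows with V, hence with |u| on [-k, k], and so does u^n for even n. Thus u^n - E and
  w_h' - \<lambda> w_h change sign at the same level |u| = E^(1/n) for a suitable constant \<lambda>;
  integrating their nonnegative product gives \<integral> u^n w_h' \<ge> E \<integral> w_h', so G_n is
  increasing.\<close>

lemma integral_pos_if_continuous_nonneg:
  fixes g :: "real \<Rightarrow> real"
  assumes "a < b" and "continuous_on {a..b} g" and "\<And>x. x \<in> {a..b} \<Longrightarrow> 0 \<le> g x"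
    and "x \<in> {a..b}" and "0 < g x"
  shows "0 < integral {a..b} g"
proof -
  have "0 \<le> integral {a..b} g"
    using assms integrable_continuous_interval by (intro integral_nonneg) auto
  moreover have "integral {a..b} g \<noteq> 0"
    using assms integral_eq_0_iff[of a b g] by force
  ultimately show ?thesis
    by linarith
qed

lemma weighted_mean_le_if_sign_crossing:
  fixes f p q :: "'a::euclidean_space \<Rightarrow> real"
  assumes "(p has_integral A) S" and "((\<lambda>x. f x * p x) has_integral E * A) S"
    and "(q has_integral A') S" and "((\<lambda>x. f x * q x) has_integral B') S" and "0 < A'"
    and "\<And>x. x \<in> S \<Longrightarrow> 0 \<le> (f x - E) * (q x - c * p x)"
  shows "E \<le> B' / A'"
proof -
  have "((\<lambda>x. (f x * q x - E * q x) - c * (f x * p x - E * p x))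
          has_integral (B' - E * A') - c * (E * A - E * A)) S"
    using assms by (intro has_integral_diff has_integral_mult_right)
  then have "((\<lambda>x. (f x - E) * (q x - c * p x)) has_integral B' - E * A') S"
    by (simp add: algebra_simps)
  then have "0 \<le> B' - E * A'"
    using assms(6) by (rule has_integral_nonneg)
  then show ?thesis
    using \<open>0 < A'\<close> by (simp add: field_simps)
qed

lemma even_power_compare_root:
  fixes u E :: real
  assumes "even n" and "0 < n" and "0 \<le> E"
  shows "u ^ n \<le> E \<longleftrightarrow> \<bar>u\<bar> \<le> root n E" and "E \<le> u ^ n \<longleftrightarrow> root n E \<le> \<bar>u\<bar>"
proof -
  have "u ^ n = \<bar>u\<bar> ^ n"
    using \<open>even n\<close> by (simp add: power_even_abs)
  moreover have "E = root n E ^ n"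
    using assms by simp
  ultimately show "u ^ n \<le> E \<longleftrightarrow> \<bar>u\<bar> \<le> root n E" and "E \<le> u ^ n \<longleftrightarrow> root n E \<le> \<bar>u\<bar>"
    using assms by (metis abs_ge_zero power_mono_iff real_root_ge_zero)+
qed

lemma level_ratio_mono:
  fixes v w h h' :: real
  assumes "v \<le> w" and "w < h" and "h \<le> h'"
  shows "(h' - v) / (h - v) \<le> (h' - w) / (h - w)"
proof -
  have "(h' - w) * (h - v) - (h' - v) * (h - w) = (h' - h) * (w - v)"
    by algebra
  then have "(h' - v) * (h - w) \<le> (h' - w) * (h - v)"
    using assms by (smt (verit) mult_nonneg_nonneg)
  then show ?thesis
    using assms by (simp add: field_simps)
qed

definition potential :: "real \<Rightarrow> real \<Rightarrow> real \<Rightarrow> real" where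
  "potential \<beta> k u = \<beta> * (k^2 * u^2 / 2 - u^4 / 4)"

lemma Ham_symmetric: "Ham \<beta> k (-k) u y = y^2 / 2 + potential \<beta> k u"
  unfolding Ham_def potential_def by (simp add: algebra_simps power2_eq_square)

lemma potential_0 [simp]: "potential \<beta> k 0 = 0"
  by (simp add: potential_def)

lemma potential_abs [simp]: "potential \<beta> k \<bar>u\<bar> = potential \<beta> k u"
  by (simp add: potential_def power2_abs power4_eq_xxxx abs_mult_self_eq)

lemma potential_at_k: "potential \<beta> k k = \<beta> * k^4 / 4"
  by (simp add: potential_def algebra_simps power2_eq_square power4_eq_xxxx)

lemma potential_mono_abs:
  assumes "0 < \<beta>" and "\<bar>x\<bar> \<le> \<bar>y\<bar>" and "\<bar>y\<bar> \<le> k"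
  shows "potential \<beta> k x \<le> potential \<beta> k y"
proof -
  have "x^2 \<le> y^2" and "y^2 \<le> k^2"
    using assms abs_le_square_iff[of y k] by (auto simp: abs_le_square_iff)
  then have "0 \<le> \<beta> / 4 * ((y^2 - x^2) * ((k^2 - x^2) + (k^2 - y^2)))"
    using \<open>0 < \<beta>\<close> by (intro mult_nonneg_nonneg) auto
  also have "\<dots> = potential \<beta> k y - potential \<beta> k x"
    by (simp add: potential_def algebra_simps power2_eq_square power4_eq_xxxx)
  finally show ?thesis
    by simp
qed

text \<open>Truncating at 0 makes the weight vanish off the oval, so all oval integrals become
  integrals over the fixed interval [-k, k].\<close>

definition oval_weight :: "real \<Rightarrow> real \<Rightarrow> real \<Rightarrow> real \<Rightarrow> real" where
  "oval_weight \<beta> k h u = 2 * sqrt (2 * max 0 (h - potential \<beta> k u))"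

lemma oval_weight_nonneg: "0 \<le> oval_weight \<beta> k h u"
  by (simp add: oval_weight_def)

lemma oval_weight_eq_0: "h \<le> potential \<beta> k u \<Longrightarrow> oval_weight \<beta> k h u = 0"
  by (simp add: oval_weight_def)

lemma oval_weight_inside: "potential \<beta> k u \<le> h \<Longrightarrow>
    oval_weight \<beta> k h u = 2 * sqrt (2 * (h - potential \<beta> k u))"
  by (simp add: oval_weight_def)

lemma continuous_on_oval_weight: "continuous_on S (oval_weight \<beta> k h)"
  unfolding oval_weight_def potential_def by (intro continuous_intros) auto

lemma oval_weight_pos_0: "0 < h \<Longrightarrow> 0 < oval_weight \<beta> k h 0"
  by (simp add: oval_weight_def)

lemma oval_weight_le_scaled:
  assumes "potential \<beta> k u \<le> c" and "c < h" and "h \<le> h'"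
  shows "oval_weight \<beta> k h' u \<le> sqrt ((h' - c) / (h - c)) * oval_weight \<beta> k h u"
proof -
  define v where "v = potential \<beta> k u"
  have "2 * (h' - v) = (h' - v) / (h - v) * (2 * (h - v))"
    using assms by (simp add: v_def field_simps)
  also have "\<dots> \<le> (h' - c) / (h - c) * (2 * (h - v))"
    using assms level_ratio_mono[of v c h h'] by (intro mult_right_mono) (auto simp: v_def)
  finally have "sqrt (2 * (h' - v)) \<le> sqrt ((h' - c) / (h - c)) * sqrt (2 * (h - v))"
    by (metis real_sqrt_le_mono real_sqrt_mult)
  then show ?thesis
    using assms by (simp add: oval_weight_inside v_def)
qed

lemma scaled_le_oval_weight:
  assumes "c \<le> potential \<beta> k u" and "c < h" and "h \<le> h'"
  shows "sqrt ((h' - c) / (h - c)) * oval_weight \<beta> k h u \<le> oval_weight \<beta> k h' u"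
proof (cases "potential \<beta> k u < h")
  case True
  define v where "v = potential \<beta> k u"
  have "(h' - c) / (h - c) * (2 * (h - v)) \<le> (h' - v) / (h - v) * (2 * (h - v))"
    using assms True level_ratio_mono[of c v h h'] by (intro mult_right_mono) (auto simp: v_def)
  also have "\<dots> = 2 * (h' - v)"
    using True by (simp add: v_def field_simps)
  finally have "sqrt ((h' - c) / (h - c)) * sqrt (2 * (h - v)) \<le> sqrt (2 * (h' - v))"
    by (metis real_sqrt_le_mono real_sqrt_mult)
  then show ?thesis
    using assms True by (simp add: oval_weight_inside v_def)
next
  case False
  then show ?thesis
    by (simp add: oval_weight_eq_0 oval_weight_nonneg)
qed

lemma potential_crossing:
  assumes "0 < \<beta>" and "0 < k" and "even n" and "0 < n" and "0 \<le> E" and "u \<in> {-k..k}"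
  shows "u^n \<le> E \<Longrightarrow> potential \<beta> k u \<le> potential \<beta> k (min (root n E) k)"
    and "E \<le> u^n \<Longrightarrow> potential \<beta> k (min (root n E) k) \<le> potential \<beta> k u"
proof -
  have "0 \<le> min (root n E) k" and "\<bar>u\<bar> \<le> k"
    using assms by auto
  then show "u^n \<le> E \<Longrightarrow> potential \<beta> k u \<le> potential \<beta> k (min (root n E) k)"
    and "E \<le> u^n \<Longrightarrow> potential \<beta> k (min (root n E) k) \<le> potential \<beta> k u"
    using even_power_compare_root[OF assms(3-5), of u] \<open>0 < \<beta>\<close>
    by (auto intro!: potential_mono_abs)
qed

lemma Gamma_projection:
  "{u. \<exists>y. (u, y) \<in> Gamma \<beta> k (-k) h} = {u. \<bar>u\<bar> < k \<and> potential \<beta> k u \<le> h}"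
proof (intro set_eqI iffI)
  fix u
  assume "u \<in> {u. \<exists>y. (u, y) \<in> Gamma \<beta> k (-k) h}"
  then obtain y where "\<bar>u\<bar> < k" and "y^2 / 2 + potential \<beta> k u = h"
    by (auto simp: Gamma_def Ham_symmetric)
  moreover from \<open>y^2 / 2 + potential \<beta> k u = h\<close> have "potential \<beta> k u \<le> h"
    using zero_le_power2[of y] by linarith
  ultimately show "u \<in> {u. \<bar>u\<bar> < k \<and> potential \<beta> k u \<le> h}"
    by simp
next
  fix u
  assume u: "u \<in> {u. \<bar>u\<bar> < k \<and> potential \<beta> k u \<le> h}"
  then have "Ham \<beta> k (-k) u (sqrt (2 * (h - potential \<beta> k u))) = h"
    by (simp add: Ham_symmetric field_simps)
  with u show "u \<in> {u. \<exists>y. (u, y) \<in> Gamma \<beta> k (-k) h}"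
    by (auto simp: Gamma_def)
qed

lemma oval_integral_eq_weighted_integral:
  assumes "h < \<beta> * k^4 / 4"
  shows "oval_integral \<beta> k (-k) n h = integral {-k..k} (\<lambda>u. u^n * oval_weight \<beta> k h u)"
proof -
  define S where "S = {u. \<bar>u\<bar> < k \<and> potential \<beta> k u \<le> h}"
  have outside: "h \<le> potential \<beta> k u" if "u \<in> {-k..k}" and "u \<notin> S" for u
  proof (cases "\<bar>u\<bar> = k")
    case True
    then have "potential \<beta> k u = \<beta> * k^4 / 4"
      by (metis potential_abs potential_at_k)
    with assms show ?thesis
      by simp
  next
    case False
    with that show ?thesis
      by (auto simp: S_def)
  qed
  have "S \<inter> {-k..k} = S"
    by (auto simp: S_def)
  have "oval_integral \<beta> k (-k) n h = integral S (\<lambda>u. u^n * oval_weight \<beta> k h u)"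
    unfolding oval_integral_def Gamma_projection S_def[symmetric]
    by (intro integral_cong) (simp add: S_def Ham_symmetric oval_weight_inside)
  also have "\<dots> = integral {-k..k} (\<lambda>u. if u \<in> S then u^n * oval_weight \<beta> k h u else 0)"
    using \<open>S \<inter> {-k..k} = S\<close> by (simp only: integral_restrict_Int)
  also have "\<dots> = integral {-k..k} (\<lambda>u. u^n * oval_weight \<beta> k h u)"
    by (intro integral_cong) (simp add: outside oval_weight_eq_0)
  finally show ?thesis .
qed

definition oval_mean :: "real \<Rightarrow> real \<Rightarrow> nat \<Rightarrow> real \<Rightarrow> real" where
  "oval_mean \<beta> k n h =
     integral {-k..k} (\<lambda>u. u^n * oval_weight \<beta> k h u) / integral {-k..k} (oval_weight \<beta> k h)"

lemma G_ratio_eq_oval_mean: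
  "h < \<beta> * k^4 / 4 \<Longrightarrow> G_ratio \<beta> k (-k) n h = oval_mean \<beta> k n h"
  using oval_integral_eq_weighted_integral[of h \<beta> k n] oval_integral_eq_weighted_integral[of h \<beta> k 0]
  by (simp add: G_ratio_def oval_mean_def)

lemma integrable_oval_weight:
  shows "oval_weight \<beta> k h integrable_on {a..b}"
    and "(\<lambda>u. u^n * oval_weight \<beta> k h u) integrable_on {a..b}"
  by (intro integrable_continuous_interval continuous_intros continuous_on_oval_weight)+

lemma oval_weight_integral_pos: "0 < k \<Longrightarrow> 0 < h \<Longrightarrow> 0 < integral {-k..k} (oval_weight \<beta> k h)"
  by (rule integral_pos_if_continuous_nonneg[of _ _ _ 0])
    (auto simp: continuous_on_oval_weight oval_weight_nonneg oval_weight_pos_0)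

lemma oval_mean_nonneg: "even n \<Longrightarrow> 0 \<le> oval_mean \<beta> k n h"
  unfolding oval_mean_def
  by (intro divide_nonneg_nonneg integral_nonneg integrable_oval_weight)
    (auto simp: oval_weight_nonneg)

lemma oval_mean_times_integral:
  "0 < k \<Longrightarrow> 0 < h \<Longrightarrow> oval_mean \<beta> k n h * integral {-k..k} (oval_weight \<beta> k h)
     = integral {-k..k} (\<lambda>u. u^n * oval_weight \<beta> k h u)"
  using oval_weight_integral_pos[of k h \<beta>] by (simp add: oval_mean_def)

text \<open>A mean of u^n cannot exceed all values of u^n on the oval, so the crossing level lies
  inside it.\<close>

lemma crossing_level_below:
  assumes "0 < \<beta>" and "0 < k" and "even n" and "0 < n" and "0 < h"
  shows "potential \<beta> k (min (root n (oval_mean \<beta> k n h)) k) < h"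
proof (rule ccontr)
  define E where "E = oval_mean \<beta> k n h"
  define w where "w = oval_weight \<beta> k h"
  assume "\<not> potential \<beta> k (min (root n (oval_mean \<beta> k n h)) k) < h"
  then have level: "h \<le> potential \<beta> k (min (root n E) k)"
    by (simp add: E_def)
  have below_mean: "u^n < E" if "u \<in> {-k..k}" and "potential \<beta> k u < h" for u
    using potential_crossing(2)[OF assms(1-4) _ that(1), of E] level that(2)
      oval_mean_nonneg[OF \<open>even n\<close>] by (fastforce simp: E_def)
  have "0 < integral {-k..k} (\<lambda>u. (E - u^n) * w u)"
  proof (rule integral_pos_if_continuous_nonneg[of _ _ _ 0])
    show "continuous_on {-k..k} (\<lambda>u. (E - u^n) * w u)"
      unfolding w_def by (intro continuous_intros continuous_on_oval_weight)
    show "0 \<le> (E - u^n) * w u" if "u \<in> {-k..k}" for u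
      using below_mean[OF that] oval_weight_eq_0[of h \<beta> k u]
      by (cases "potential \<beta> k u < h") (auto simp: w_def oval_weight_nonneg)
    show "0 < (E - 0^n) * w 0"
      using below_mean[of 0] assms by (simp add: w_def oval_weight_pos_0)
  qed (use assms in auto)
  also have "integral {-k..k} (\<lambda>u. (E - u^n) * w u)
      = E * integral {-k..k} w - integral {-k..k} (\<lambda>u. u^n * w u)"
    unfolding w_def left_diff_distrib
    by (subst integral_diff) (auto intro: integrable_on_mult_right integrable_oval_weight)
  also have "\<dots> = 0"
    using oval_mean_times_integral[OF assms(2,5)] by (simp add: E_def w_def)
  finally show False
    by simp
qed

lemma oval_mean_mono:
  assumes "0 < \<beta>" and "0 < k" and "even n" and "0 < n" and "0 < h" and "h \<le> h'"
  shows "oval_mean \<beta> k n h \<le> oval_mean \<beta> k n h'"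
proof -
  define E where "E = oval_mean \<beta> k n h"
  define c where "c = potential \<beta> k (min (root n E) k)"
  have "0 \<le> E" and "c < h"
    using oval_mean_nonneg crossing_level_below assms by (auto simp: E_def c_def)
  have crossing: "0 \<le> (u^n - E) * (oval_weight \<beta> k h' u - sqrt ((h' - c) / (h - c)) * oval_weight \<beta> k h u)"
    if "u \<in> {-k..k}" for u
  proof (cases "u^n \<le> E")
    case True
    then have "potential \<beta> k u \<le> c"
      using potential_crossing(1)[OF assms(1-4) \<open>0 \<le> E\<close> that] by (simp add: c_def)
    then show ?thesis
      using True oval_weight_le_scaled \<open>c < h\<close> \<open>h \<le> h'\<close> by (simp add: mult_nonpos_nonpos)
  next
    case False
    then have "c \<le> potential \<beta> k u"
      using potential_crossing(2)[OF assms(1-4) \<open>0 \<le> E\<close> that] by (simp add: c_def)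
    then show ?thesis
      using False scaled_le_oval_weight \<open>c < h\<close> \<open>h \<le> h'\<close> by simp
  qed
  have "0 < h'"
    using assms by simp
  show ?thesis
    unfolding oval_mean_def[of _ _ _ h'] E_def[symmetric]
  proof (rule weighted_mean_le_if_sign_crossing[OF _ _ _ _ _ crossing])
    show "((\<lambda>u. u^n * oval_weight \<beta> k h u) has_integral E * integral {-k..k} (oval_weight \<beta> k h)) {-k..k}"
      using oval_mean_times_integral[OF assms(2,5)] integrable_oval_weight(2)
      by (simp add: E_def has_integral_integral)
  qed (use integrable_oval_weight oval_weight_integral_pos[OF assms(2) \<open>0 < h'\<close>]
      in \<open>auto simp: has_integral_integral\<close>)
qed

theorem proposition3p11:
  fixes \<beta> k u0 :: real and n :: nat
  assumes "\<beta> > 0" and "k > 0" and "u0 = - k"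
    and "even n" and "n > 0"
  shows "mono_on {0<..<\<beta> * u0^4 / 4} (G_ratio \<beta> k u0 n)
       \<or> antimono_on {0<..<\<beta> * u0^4 / 4} (G_ratio \<beta> k u0 n)"
proof -
  have "mono_on {0<..<\<beta> * u0^4 / 4} (G_ratio \<beta> k u0 n)"
  proof (rule mono_onI)
    fix h h'
    assume "h \<in> {0<..<\<beta> * u0^4 / 4}" and "h' \<in> {0<..<\<beta> * u0^4 / 4}" and "h \<le> h'"
    then show "G_ratio \<beta> k u0 n h \<le> G_ratio \<beta> k u0 n h'"
      using assms G_ratio_eq_oval_mean oval_mean_mono by auto
  qed
  then show ?thesis ..
qed

end
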